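(* Let $\mathcal H_A,\mathcal H_B$ be finite-dimensional Hilbert spaces, $U$ a unitary on $\mathcal H_A\otimes\mathcal H_B$, $\alpha,\alpha'$ density operators on $\mathcal H_A$ and $\beta,\beta'$ density operators on $\mathcal H_B$, with at least one of $\alpha,\beta$ not maximally mixed, such that $U(\alpha\otimes\beta)U^\dagger=\alpha'\otimes\beta'$, and assume $\alpha'$ is invertible. Let $\mathcal E[X]=\operatorname{Tr}_B[U(X\otimes\beta)U^\dagger]$. Then $\mathcal E$ is tabletop reversible for the prior $\alpha$; specifically, its Petz recovery map satisfies $$\hat{\mathcal E}_\alpha[X]=\operatorname{Tr}_B\!\left[U^\dagger(X\otimes\beta')U\right]\quad\text{for all operators }X\text{ on }\mathcal H_A.$$
   Context: For a channel $\mathcal E$ and a density operator $\alpha$ with $\mathcal E[\alpha]$ invertible, the Petz recovery map is $\hat{\mathcal E}_\alpha[X]=\sqrt{\alpha}\,\mathcal E^\dagger[\mathcal E[\alpha]^{-1/2}X\mathcal E[\alpha]^{-1/2}]\sqrt\alpha$, where $\mathcal E^\dagger$ is the Hilbert–Schmidt adjoint ($\operatorname{Tr}(\mathcal E[X]Y)=\operatorname{Tr}(X\mathcal E^\dagger[Y])$). A channel $\mathcal E[X]=\operatorname{Tr}_B[U(X\otimes\beta)U^\dagger]$ is tabletop reversible for the prior $\alpha$ if there exists a density operator $\beta'$ on $\mathcal H_B$ with $\hat{\mathcal E}_\alpha[X]=\operatorname{Tr}_B[U^\dagger(X\otimes\beta')U]$ for the same $U$. *)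

theory Defs
  imports "HOL-Analysis.Analysis"
begin

text \<open>Finite-dimensional Hilbert spaces H_A, H_B are modelled as complex^'a and
complex^'b for finite index types 'a, 'b; operators are square matrices.
H_A (x) H_B is complex^('a \<times> 'b).\<close>

definition dagger :: "complex^'n^'m \<Rightarrow> complex^'m^'n" where
  "dagger M = (\<chi> i j. cnj (M $ j $ i))"

definition unitary_mat :: "complex^'n^'n \<Rightarrow> bool" where
  "unitary_mat U \<longleftrightarrow> U ** dagger U = mat 1 \<and> dagger U ** U = mat 1"

definition hermitian_mat :: "complex^'n^'n \<Rightarrow> bool" where
  "hermitian_mat A \<longleftrightarrow> dagger A = A"

definition psd_mat :: "complex^'n^'n \<Rightarrow> bool" where
  "psd_mat A \<longleftrightarrow> hermitian_mat A \<and>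
     (\<forall>v :: complex^'n. 0 \<le> Re (\<Sum>i\<in>UNIV. \<Sum>j\<in>UNIV. cnj (v $ i) * A $ i $ j * v $ j))"

definition density_op :: "complex^'n^'n \<Rightarrow> bool" where
  "density_op A \<longleftrightarrow> psd_mat A \<and> trace A = 1"

definition maximally_mixed :: "complex^'n^'n \<Rightarrow> bool" where
  "maximally_mixed A \<longleftrightarrow> A = mat (1 / of_nat CARD('n))"

definition tensor :: "complex^'a^'a \<Rightarrow> complex^'b^'b \<Rightarrow> complex^('a \<times> 'b)^('a \<times> 'b)" where
  "tensor X Y = (\<chi> p q. X $ fst p $ fst q * Y $ snd p $ snd q)"

definition ptrB :: "complex^('a \<times> 'b::finite)^('a \<times> 'b) \<Rightarrow> complex^'a^'a" where
  "ptrB M = (\<chi> i j. \<Sum>b\<in>(UNIV :: 'b set). M $ (i, b) $ (j, b))"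

definition channel :: "complex^('a \<times> 'b)^('a \<times> 'b) \<Rightarrow> complex^'b^'b::finite
    \<Rightarrow> complex^'a^'a \<Rightarrow> complex^'a^'a" where
  "channel U \<beta> X = ptrB (U ** tensor X \<beta> ** dagger U)"

definition hs_adjoint :: "(complex^'n^'n \<Rightarrow> complex^'m^'m) \<Rightarrow> complex^'m^'m \<Rightarrow> complex^'n^'n" where
  "hs_adjoint E = (THE F. \<forall>X Y. trace (E X ** Y) = trace (X ** F Y))"

definition psd_sqrt :: "complex^'n^'n \<Rightarrow> complex^'n^'n" where
  "psd_sqrt A = (THE S. psd_mat S \<and> S ** S = A)"

definition petz :: "(complex^'n^'n \<Rightarrow> complex^'m^'m) \<Rightarrow> complex^'n^'n
    \<Rightarrow> complex^'m^'m \<Rightarrow> complex^'n^'n" where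
  "petz E \<alpha> X =
     (let R = matrix_inv (psd_sqrt (E \<alpha>))
      in psd_sqrt \<alpha> ** hs_adjoint E (R ** X ** R) ** psd_sqrt \<alpha>)"

definition tabletop_reversible :: "complex^('a \<times> 'b)^('a \<times> 'b) \<Rightarrow> complex^'b^'b::finite
    \<Rightarrow> complex^'a^'a \<Rightarrow> bool" where
  "tabletop_reversible U \<beta> \<alpha> \<longleftrightarrow>
     (\<exists>\<beta>' :: complex^'b^'b. density_op \<beta>' \<and>
        (\<forall>X. petz (channel U \<beta>) \<alpha> X = ptrB (dagger U ** tensor X \<beta>' ** U)))"

end

theory Submission
  imports Defs
begin

(* Positive square roots are unique, so they commute with unitary conjugation and with tensor
   products; hence U (\<alpha> \<otimes> \<beta>) U\<dagger> = \<alpha>' \<otimes> \<beta>' lifts to U (\<surd>\<alpha> \<otimes> \<surd>\<beta>) U\<dagger> = \<surd>\<alpha>' \<otimes> \<surd>\<beta>'.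
   The channel maps \<alpha> to \<alpha>', and its Hilbert-Schmidt adjoint is Y \<mapsto> Tr_B[(1 \<otimes> \<beta>) U\<dagger> (Y \<otimes> 1) U].
   Cyclicity of the partial trace in the B factor lets \<surd>\<beta> join \<surd>\<alpha>, so the Petz map is
   Tr_B[(\<surd>\<alpha> \<otimes> \<surd>\<beta>) U\<dagger> (R X R \<otimes> 1) U (\<surd>\<alpha> \<otimes> \<surd>\<beta>)] with R = \<surd>\<alpha>'\<inverse>, and the lifted identity
   turns this into Tr_B[U\<dagger> (X \<otimes> \<beta>') U].  Square roots exist by the spectral theorem, whose
   eigenvectors are found one at a time by maximising the Hermitian form on the unit sphere of the
   orthogonal complement of those already found. *)

lemma matrix_mult_nth: "(A ** B) $ i $ j = (\<Sum>k\<in>UNIV. A $ i $ k * B $ k $ j)"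
  by (simp add: matrix_matrix_mult_def)

lemma mat_nth: "mat c $ i $ j = (if i = j then c else 0)"
  by (simp add: mat_def)

lemma dagger_nth: "dagger M $ i $ j = cnj (M $ j $ i)"
  by (simp add: dagger_def)

lemma tensor_nth: "tensor X Y $ p $ q = X $ fst p $ fst q * Y $ snd p $ snd q"
  by (simp add: tensor_def)

lemma ptrB_nth: "ptrB M $ i $ j = (\<Sum>b\<in>UNIV. M $ (i, b) $ (j, b))"
  by (simp add: ptrB_def)

lemma sum_UNIV_prod:
  "(\<Sum>p\<in>(UNIV :: ('a::finite \<times> 'b::finite) set). f p) = (\<Sum>a\<in>UNIV. \<Sum>b\<in>UNIV. f (a, b))"
  by (simp add: sum.cartesian_product)

lemma dagger_dagger [simp]: "dagger (dagger A) = A"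
  by (simp add: vec_eq_iff dagger_nth)

lemma dagger_mult: "dagger (A ** B) = dagger B ** dagger A"
  by (simp add: vec_eq_iff dagger_nth matrix_mult_nth mult.commute)

lemma dagger_diff: "dagger (A - B) = dagger A - dagger B"
  by (simp add: vec_eq_iff dagger_nth)

lemma dagger_tensor: "dagger (tensor A B) = tensor (dagger A) (dagger B)"
  by (simp add: vec_eq_iff dagger_nth tensor_nth)

lemma matrix_mult_diff_left: "(A - B) ** C = A ** C - B ** (C :: complex^'k^'n::finite)"
  by (simp add: vec_eq_iff matrix_mult_nth left_diff_distrib sum_subtractf)

lemma matrix_mult_diff_right: "A ** (B - C) = A ** B - A ** (C :: complex^'k^'n::finite)"
  by (simp add: vec_eq_iff matrix_mult_nth right_diff_distrib sum_subtractf)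

lemma matrix_mult_uminus_left: "(- A) ** B = - (A ** (B :: complex^'k^'n::finite))"
  by (simp add: vec_eq_iff matrix_mult_nth sum_negf)

lemma trace_uminus: "trace (- A) = - trace (A :: complex^'n^'n)"
  by (simp add: trace_def sum_negf)

lemma unitary_matD:
  assumes "unitary_mat U"
  shows "dagger U ** U = mat 1" and "U ** dagger U = mat 1"
  using assms by (simp_all add: unitary_mat_def)

lemma matrix_inv_inverse:
  assumes "invertible (A :: complex^'n::finite^'n)"
  shows "A ** matrix_inv A = mat 1" and "matrix_inv A ** A = mat 1"
  using someI_ex[OF assms[unfolded invertible_def]] by (simp_all add: matrix_inv_def)

subsection \<open>Tensor products and the partial trace\<close>

lemma tensor_mult: "tensor A B ** tensor C D = tensor (A ** C) (B ** D)"
  by (simp add: vec_eq_iff tensor_nth matrix_mult_nth sum_UNIV_prod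
      sum_product mult_ac)

lemma hermitian_tensor: "hermitian_mat A \<Longrightarrow> hermitian_mat B \<Longrightarrow> hermitian_mat (tensor A B)"
  by (simp add: hermitian_mat_def dagger_tensor)

lemma ptrB_tensor: "trace Y = 1 \<Longrightarrow> ptrB (tensor X Y) = X"
  by (simp add: vec_eq_iff ptrB_nth tensor_nth trace_def flip: sum_distrib_left)

lemma sum_if_const_cond: "(\<Sum>x\<in>A. if P then f x else 0) = (if P then (\<Sum>x\<in>A. f x) else 0)"
  by simp

lemma ptrB_tensor_mult_left: "ptrB (tensor A (mat 1) ** M) = A ** ptrB M"
  by (simp add: vec_eq_iff ptrB_nth tensor_nth matrix_mult_nth sum_UNIV_prod mat_nth
      sum_distrib_left sum_distrib_right if_distrib if_distribR sum_if_const_cond cong: if_cong)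
    (subst sum.swap, simp add: mult_ac)

lemma ptrB_tensor_mult_right: "ptrB (M ** tensor B (mat 1)) = ptrB M ** B"
  by (simp add: vec_eq_iff ptrB_nth tensor_nth matrix_mult_nth sum_UNIV_prod mat_nth
      sum_distrib_left sum_distrib_right if_distrib if_distribR sum_if_const_cond cong: if_cong)
    (subst sum.swap, simp add: mult_ac)

lemma ptrB_cyclic: "ptrB (tensor (mat 1) B ** M) = ptrB (M ** tensor (mat 1) B)"
  by (simp add: vec_eq_iff ptrB_nth tensor_nth matrix_mult_nth sum_UNIV_prod mat_nth
      sum_distrib_left sum_distrib_right if_distrib if_distribR sum_if_const_cond cong: if_cong)
    (subst sum.swap, simp add: mult_ac)

lemma trace_mult_ptrB: "trace (Y ** ptrB M) = trace (tensor Y (mat 1) ** M)"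
  by (simp add: trace_def ptrB_nth tensor_nth matrix_mult_nth sum_UNIV_prod mat_nth
      sum_distrib_left sum_distrib_right if_distrib if_distribR sum_if_const_cond cong: if_cong)
    (subst sum.swap, simp add: mult_ac)

lemma ptrB_sandwich:
  "A ** ptrB (tensor (mat 1) (B ** B) ** M) ** A = ptrB (tensor A B ** M ** tensor A B)"
proof -
  have "ptrB (tensor (mat 1) (B ** B) ** M) = ptrB (tensor (mat 1) B ** (tensor (mat 1) B ** M))"
    by (simp add: matrix_mul_assoc tensor_mult)
  also have "\<dots> = ptrB (tensor (mat 1) B ** M ** tensor (mat 1) B)"
    by (simp only: ptrB_cyclic)
  finally have "A ** ptrB (tensor (mat 1) (B ** B) ** M) ** A =
      ptrB (tensor A (mat 1) ** (tensor (mat 1) B ** M ** tensor (mat 1) B) ** tensor A (mat 1))"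
    by (simp add: ptrB_tensor_mult_left ptrB_tensor_mult_right)
  also have "\<dots> = ptrB ((tensor A (mat 1) ** tensor (mat 1) B) ** M **
      (tensor (mat 1) B ** tensor A (mat 1)))"
    by (simp add: matrix_mul_assoc)
  also have "\<dots> = ptrB (tensor A B ** M ** tensor A B)"
    by (simp add: tensor_mult)
  finally show ?thesis .
qed

definition cinner :: "complex^'n \<Rightarrow> complex^'n \<Rightarrow> complex" where
  "cinner u v = (\<Sum>i\<in>UNIV. cnj (u $ i) * v $ i)"

lemma psd_mat_iff: "psd_mat A \<longleftrightarrow> hermitian_mat A \<and> (\<forall>v. 0 \<le> Re (cinner v (A *v v)))"
proof -
  have "(\<Sum>i\<in>UNIV. \<Sum>j\<in>UNIV. cnj (v $ i) * A $ i $ j * v $ j) = cinner v (A *v v)" for v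
    by (simp add: cinner_def matrix_vector_mult_def sum_distrib_left mult.assoc)
  then show ?thesis
    by (simp add: psd_mat_def)
qed

lemma psd_matD: "psd_mat A \<Longrightarrow> 0 \<le> Re (cinner v (A *v v))"
  and psd_mat_hermitian: "psd_mat A \<Longrightarrow> hermitian_mat A"
  by (simp_all add: psd_mat_iff)

lemma cinner_diff_left: "cinner (u - v) w = cinner u w - cinner v w"
  by (simp add: cinner_def sum_subtractf left_diff_distrib)

lemma cinner_diff_right: "cinner u (v - w) = cinner u v - cinner u w"
  by (simp add: cinner_def sum_subtractf right_diff_distrib)

lemma scaleR_complex: "r *\<^sub>R (z :: complex) = of_real r * z"
  by (rule scaleR_conv_of_real)

lemma cinner_scaleR_left: "cinner (r *\<^sub>R u) v = of_real r * cinner u v"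
  by (simp add: cinner_def sum_distrib_left scaleR_complex mult_ac)

lemma cinner_scaleR_right: "cinner u (r *\<^sub>R v) = of_real r * cinner u v"
  by (simp add: cinner_def sum_distrib_left scaleR_complex mult_ac)

lemma cinner_commute: "cinner v u = cnj (cinner u v)"
  by (simp add: cinner_def mult.commute)

lemma cinner_self: "cinner v v = of_real ((norm v)\<^sup>2)"
proof -
  have "cinner v v = (\<Sum>i\<in>UNIV. of_real ((norm (v $ i))\<^sup>2))"
    unfolding cinner_def by (intro sum.cong refl) (metis complex_norm_square mult.commute)
  also have "\<dots> = of_real (\<Sum>i\<in>UNIV. (norm (v $ i))\<^sup>2)"
    by simp
  also have "(\<Sum>i\<in>UNIV. (norm (v $ i))\<^sup>2) = (norm v)\<^sup>2"
    by (simp add: power2_norm_eq_inner inner_vec_def)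
  finally show ?thesis .
qed

lemma cinner_adjoint: "cinner u (M *v v) = cinner (dagger M *v u) v"
proof -
  have "cinner u (M *v v) = (\<Sum>i\<in>UNIV. \<Sum>j\<in>UNIV. cnj (u $ i) * M $ i $ j * v $ j)"
    by (simp add: cinner_def matrix_vector_mult_def sum_distrib_left mult.assoc)
  also have "\<dots> = (\<Sum>j\<in>UNIV. \<Sum>i\<in>UNIV. cnj (u $ i) * M $ i $ j * v $ j)"
    by (rule sum.swap)
  also have "\<dots> = cinner (dagger M *v u) v"
    by (simp add: cinner_def matrix_vector_mult_def dagger_nth sum_distrib_left sum_distrib_right
        mult_ac)
  finally show ?thesis .
qed

lemma cinner_hermitian: "hermitian_mat A \<Longrightarrow> cinner u (A *v v) = cinner (A *v u) v"
  by (simp add: cinner_adjoint hermitian_mat_def)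

lemma matrix_vector_mult_scaleR: "(A :: complex^'n^'m) *v (r *\<^sub>R x) = r *\<^sub>R (A *v x)"
  by (simp add: vec_eq_iff matrix_vector_mult_def scaleR_complex sum_distrib_left mult_ac)

subsection \<open>The spectral theorem for Hermitian matrices\<close>

lemma quadratic_nonneg_imp_linear_coeff_zero:
  fixes s c :: real
  assumes "\<And>t. 2 * t * s \<le> t\<^sup>2 * c"
  shows "s = 0"
proof (rule ccontr)
  assume "s \<noteq> 0"
  define t where "t = s / (\<bar>c\<bar> + 1)"
  have "t * s = s\<^sup>2 / (\<bar>c\<bar> + 1)"
    by (simp add: t_def power2_eq_square)
  also have "\<dots> > 0"
    using \<open>s \<noteq> 0\<close> by (intro divide_pos_pos) auto
  finally have ts: "0 < t * s" .
  have "t\<^sup>2 * c \<le> t\<^sup>2 * \<bar>c\<bar>"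
    by (simp add: mult_left_mono)
  also have "\<dots> = (t * s) * (\<bar>c\<bar> / (\<bar>c\<bar> + 1))"
    by (simp add: t_def power2_eq_square)
  also have "\<dots> < (t * s) * 2"
    using ts by (intro mult_strict_left_mono) (auto simp: divide_less_eq)
  finally show False
    using assms[of t] by (simp add: mult_ac)
qed

text \<open>The form of \<open>B\<close> vanishes at \<open>x\<close> and is nonnegative on the line through \<open>x\<close> in direction
  \<open>B x\<close>; its derivative there, \<open>-2 |B x|\<^sup>2\<close>, must therefore vanish.\<close>

lemma hermitian_form_min_imp_kernel:
  fixes B :: "complex^'n::finite^'n"
  assumes B: "hermitian_mat B"
    and nonneg: "\<And>t::real. 0 \<le> Re (cinner (x - t *\<^sub>R (B *v x)) (B *v (x - t *\<^sub>R (B *v x))))"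
    and zero: "Re (cinner x (B *v x)) = 0"
  shows "B *v x = 0"
proof -
  define z where "z = B *v x"
  have "Re (cinner (x - t *\<^sub>R z) (B *v (x - t *\<^sub>R z))) =
      t\<^sup>2 * Re (cinner z (B *v z)) - 2 * t * (norm z)\<^sup>2" for t
  proof -
    have "cinner (x - t *\<^sub>R z) (B *v (x - t *\<^sub>R z)) = cinner x (B *v x)
        - of_real t * cinner x (B *v z) - of_real t * cinner z (B *v x)
        + of_real t * of_real t * cinner z (B *v z)"
      by (simp add: matrix_vector_mult_diff_distrib matrix_vector_mult_scaleR cinner_diff_left
          cinner_diff_right cinner_scaleR_left cinner_scaleR_right algebra_simps)
    moreover have "cinner x (B *v z) = cinner z z"
      using cinner_hermitian[OF B, of x z] by (simp add: z_def)
    ultimately show ?thesis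
      using zero by (simp add: z_def cinner_self power2_eq_square)
  qed
  then have "2 * t * (norm z)\<^sup>2 \<le> t\<^sup>2 * Re (cinner z (B *v z))" for t
    using nonneg[of t] by (simp add: z_def)
  then have "(norm z)\<^sup>2 = 0"
    by (rule quadratic_nonneg_imp_linear_coeff_zero)
  then show ?thesis
    by (simp add: z_def)
qed

lemma exists_nonzero_orthogonal:
  fixes v :: "'n::finite \<Rightarrow> complex^'n"
  assumes "K \<noteq> UNIV"
  shows "\<exists>x. x \<noteq> 0 \<and> (\<forall>i\<in>K. cinner (v i) x = 0)"
proof (rule ccontr)
  assume none: "\<not> ?thesis"
  define P :: "complex^'n^'n" where "P = (\<chi> i j. if i \<in> K then cnj (v i $ j) else 0)"
  have Pv: "P *v x = (\<chi> i. if i \<in> K then cinner (v i) x else 0)" for x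
    by (simp add: vec_eq_iff P_def matrix_vector_mult_def cinner_def)
  have "x = 0" if "P *v x = 0" for x
  proof -
    have "cinner (v i) x = 0" if "i \<in> K" for i
      using arg_cong[OF \<open>P *v x = 0\<close>, of "\<lambda>y. y $ i"] that by (simp add: Pv)
    then show ?thesis
      using none by blast
  qed
  then obtain B where "B ** P = mat 1"
    using matrix_left_invertible_ker by blast
  then have PB: "P ** B = mat 1"
    using matrix_left_right_inverse by blast
  obtain j where j: "j \<notin> K"
    using assms by blast
  define e :: "complex^'n" where "e = (\<chi> i. if i = j then 1 else 0)"
  have "P *v (B *v e) = e"
    by (simp add: matrix_vector_mul_assoc PB)
  then have "(P *v (B *v e)) $ j = 1"
    by (simp add: e_def)
  moreover have "(P *v (B *v e)) $ j = 0"
    unfolding Pv using j by simp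
  ultimately show False
    by simp
qed

lemma form_le_max_on_sphere:
  fixes A :: "complex^'n::finite^'n"
  assumes W_scaleR: "\<And>x r. x \<in> W \<Longrightarrow> r *\<^sub>R x \<in> W"
    and max: "\<And>y. y \<in> W \<Longrightarrow> norm y = 1 \<Longrightarrow> Re (cinner y (A *v y)) \<le> m"
    and "y \<in> W"
  shows "Re (cinner y (A *v y)) \<le> m * (norm y)\<^sup>2"
proof (cases "y = 0")
  case True
  then show ?thesis
    by (simp add: cinner_def)
next
  case False
  define y' where "y' = (1 / norm y) *\<^sub>R y"
  have "Re (cinner y' (A *v y')) \<le> m"
    using max[of y'] W_scaleR \<open>y \<in> W\<close> False by (simp add: y'_def)
  moreover have "Re (cinner y' (A *v y')) = Re (cinner y (A *v y)) / (norm y)\<^sup>2"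
    by (simp add: y'_def matrix_vector_mult_scaleR cinner_scaleR_left cinner_scaleR_right
        power2_eq_square)
  ultimately show ?thesis
    using False by (simp add: field_simps)
qed

lemma hermitian_maximizer_eigenvector:
  fixes A :: "complex^'n::finite^'n"
  assumes A: "hermitian_mat A"
    and W_diff: "\<And>x y. x \<in> W \<Longrightarrow> y \<in> W \<Longrightarrow> x - y \<in> W"
    and W_scaleR: "\<And>x r. x \<in> W \<Longrightarrow> r *\<^sub>R x \<in> W"
    and A_W: "\<And>x. x \<in> W \<Longrightarrow> A *v x \<in> W"
    and x0: "x0 \<in> W" "norm x0 = 1"
    and max: "\<And>y. y \<in> W \<Longrightarrow> norm y = 1 \<Longrightarrow>
      Re (cinner y (A *v y)) \<le> Re (cinner x0 (A *v x0))"
  shows "A *v x0 = Re (cinner x0 (A *v x0)) *\<^sub>R x0"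
proof -
  define m where "m = Re (cinner x0 (A *v x0))"
  have bound: "Re (cinner y (A *v y)) \<le> m * (norm y)\<^sup>2" if "y \<in> W" for y
    using form_le_max_on_sphere[OF W_scaleR _ that] max by (simp add: m_def)
  define B :: "complex^'n^'n" where "B = mat (of_real m) - A"
  have "mat (of_real m) *v x = m *\<^sub>R x" for x :: "complex^'n"
    by (simp add: vec_eq_iff matrix_vector_mult_def mat_nth scaleR_complex if_distrib if_distribR
        cong: if_cong)
  then have Bv: "B *v x = m *\<^sub>R x - A *v x" for x
    by (simp add: B_def matrix_vector_mult_diff_rdistrib)
  have B: "hermitian_mat B"
    using A by (simp add: hermitian_mat_def B_def dagger_diff vec_eq_iff dagger_nth mat_nth)
  have form_B: "Re (cinner y (B *v y)) = m * (norm y)\<^sup>2 - Re (cinner y (A *v y))" for y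
    by (simp add: Bv cinner_diff_right cinner_scaleR_right cinner_self)
  have B_W: "B *v x \<in> W" if "x \<in> W" for x
    using W_diff[OF W_scaleR[OF that] A_W[OF that]] by (simp add: Bv)
  have "B *v x0 = 0"
  proof (rule hermitian_form_min_imp_kernel[OF B])
    fix t :: real
    have "x0 - t *\<^sub>R (B *v x0) \<in> W"
      using W_diff[OF x0(1) W_scaleR[OF B_W[OF x0(1)]]] .
    then show "0 \<le> Re (cinner (x0 - t *\<^sub>R (B *v x0)) (B *v (x0 - t *\<^sub>R (B *v x0))))"
      using form_B bound by simp
  next
    show "Re (cinner x0 (B *v x0)) = 0"
      using form_B x0(2) by (simp add: m_def)
  qed
  then have "m *\<^sub>R x0 = A *v x0"
    by (simp only: Bv right_minus_eq)
  then show ?thesis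
    unfolding m_def by (rule sym)
qed

lemma closed_orthogonal_set: "closed {x. \<forall>i\<in>K. cinner (v i) x = 0}"
proof -
  have "closed {x. cinner (v i) x = 0}" for i
    unfolding cinner_def by (rule closed_Collect_eq) (intro continuous_intros)+
  moreover have "{x. \<forall>i\<in>K. cinner (v i) x = 0} = (\<Inter>i\<in>K. {x. cinner (v i) x = 0})"
    by auto
  ultimately show ?thesis
    by (simp add: closed_INT)
qed

lemma hermitian_orthogonal_eigenvector:
  fixes A :: "complex^'n::finite^'n" and v :: "'n \<Rightarrow> complex^'n" and l :: "'n \<Rightarrow> real"
  assumes A: "hermitian_mat A" and "K \<noteq> UNIV"
    and eigen: "\<And>i. i \<in> K \<Longrightarrow> A *v v i = l i *\<^sub>R v i"
  shows "\<exists>x m. cinner x x = 1 \<and> (\<forall>i\<in>K. cinner (v i) x = 0) \<and> A *v x = m *\<^sub>R x"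
proof -
  define W where "W = {x. \<forall>i\<in>K. cinner (v i) x = 0}"
  have W_diff: "x - y \<in> W" if "x \<in> W" "y \<in> W" for x y
    using that by (simp add: W_def cinner_diff_right)
  have W_scaleR: "r *\<^sub>R x \<in> W" if "x \<in> W" for x r
    using that by (simp add: W_def cinner_scaleR_right)
  have A_W: "A *v x \<in> W" if "x \<in> W" for x
  proof -
    have "cinner (v i) (A *v x) = of_real (l i) * cinner (v i) x" if "i \<in> K" for i
      using eigen[OF that] by (simp add: cinner_hermitian[OF A] cinner_scaleR_left)
    then show ?thesis
      using \<open>x \<in> W\<close> by (simp add: W_def)
  qed
  have "closed W"
    unfolding W_def by (rule closed_orthogonal_set)
  then have compact: "compact (W \<inter> sphere 0 1)"
    by (simp add: closed_Int_compact)
  obtain x1 where "x1 \<noteq> 0" "x1 \<in> W"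
    using exists_nonzero_orthogonal[OF \<open>K \<noteq> UNIV\<close>, of v] by (auto simp: W_def)
  then have "(1 / norm x1) *\<^sub>R x1 \<in> W \<inter> sphere 0 1"
    using W_scaleR by simp
  then have nonempty: "W \<inter> sphere 0 1 \<noteq> {}"
    by blast
  have "continuous_on (W \<inter> sphere 0 1) (\<lambda>x. Re (cinner x (A *v x)))"
    unfolding cinner_def matrix_vector_mult_def by (intro continuous_intros)
  then obtain x0 where x0: "x0 \<in> W \<inter> sphere 0 1"
    and max: "\<forall>y\<in>W \<inter> sphere 0 1. Re (cinner y (A *v y)) \<le> Re (cinner x0 (A *v x0))"
    using continuous_attains_sup[OF compact nonempty] by blast
  then have "A *v x0 = Re (cinner x0 (A *v x0)) *\<^sub>R x0"
    using x0 by (intro hermitian_maximizer_eigenvector[OF A W_diff W_scaleR A_W]) auto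
  moreover have "cinner x0 x0 = 1"
    using x0 by (simp add: cinner_self)
  moreover have "\<forall>i\<in>K. cinner (v i) x0 = 0"
    using x0 by (simp add: W_def)
  ultimately show ?thesis
    by (intro exI[of _ x0] exI[of _ "Re (cinner x0 (A *v x0))"] conjI)
qed

lemma hermitian_orthonormal_eigenvectors:
  fixes A :: "complex^'n::finite^'n" and K :: "'n set"
  assumes A: "hermitian_mat A"
  shows "\<exists>v l. (\<forall>i\<in>K. \<forall>j\<in>K. cinner (v i) (v j) = (if i = j then 1 else 0)) \<and>
      (\<forall>i\<in>K. A *v v i = (l i :: real) *\<^sub>R v i)"
  using finite[of K]
proof (induction K rule: finite_induct)
  case empty
  show ?case
    by auto
next
  case (insert j K)
  then obtain v l where orth: "\<forall>i\<in>K. \<forall>k\<in>K. cinner (v i) (v k) = (if i = k then 1 else 0)"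
    and eigen: "\<forall>i\<in>K. A *v v i = (l i :: real) *\<^sub>R v i"
    by blast
  have "K \<noteq> UNIV"
    using insert(2) by blast
  obtain x m where x: "cinner x x = 1" "\<forall>i\<in>K. cinner (v i) x = 0" "A *v x = m *\<^sub>R x"
    using hermitian_orthogonal_eigenvector[of A K v l, OF A \<open>K \<noteq> UNIV\<close>] eigen by blast
  have "\<forall>i\<in>K. cinner x (v i) = 0"
    using x(2) by (metis cinner_commute complex_cnj_zero)
  define v' where "v' = v(j := x)"
  define l' where "l' = l(j := m)"
  have "\<forall>i\<in>insert j K. \<forall>k\<in>insert j K. cinner (v' i) (v' k) = (if i = k then 1 else 0)"
    using orth x \<open>\<forall>i\<in>K. cinner x (v i) = 0\<close> insert(2) by (auto simp: v'_def)
  moreover have "\<forall>i\<in>insert j K. A *v v' i = l' i *\<^sub>R v' i"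
    using eigen x insert(2) by (auto simp: v'_def l'_def)
  ultimately show ?case
    by blast
qed

definition diagm :: "('n \<Rightarrow> real) \<Rightarrow> complex^'n^'n" where
  "diagm l = (\<chi> i j. if i = j then of_real (l i) else 0)"

lemma diagm_mult: "diagm a ** diagm b = (diagm (\<lambda>i. a i * b i) :: complex^'n::finite^'n)"
  unfolding diagm_def matrix_matrix_mult_def
  by (simp add: vec_eq_iff if_distribR if_distrib[of "times _"] cong: if_cong)

lemma hermitian_diagm: "hermitian_mat (diagm l)"
  by (simp add: hermitian_mat_def vec_eq_iff diagm_def dagger_nth)

lemma hermitian_diagonalization:
  fixes A :: "complex^'n::finite^'n"
  assumes A: "hermitian_mat A"
  obtains Q l where "unitary_mat Q" and "A = Q ** diagm l ** dagger Q"
    and "psd_mat A \<Longrightarrow> \<forall>i. 0 \<le> l i"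
proof -
  obtain v :: "'n \<Rightarrow> complex^'n" and l :: "'n \<Rightarrow> real"
    where orth: "\<forall>i j. cinner (v i) (v j) = (if i = j then 1 else 0)"
      and eigen: "\<forall>i. A *v v i = l i *\<^sub>R v i"
    using hermitian_orthonormal_eigenvectors[OF A, of UNIV] by auto
  define Q :: "complex^'n^'n" where "Q = (\<chi> r c. v c $ r)"
  have "dagger Q ** Q = mat 1"
    using orth by (simp add: vec_eq_iff Q_def dagger_nth matrix_mult_nth mat_nth cinner_def)
  then have Q: "unitary_mat Q"
    using matrix_left_right_inverse by (auto simp: unitary_mat_def)
  have "(A ** Q) $ r $ c = (Q ** diagm l) $ r $ c" for r c
  proof -
    have "(A ** Q) $ r $ c = (A *v v c) $ r"
      by (simp add: Q_def matrix_mult_nth matrix_vector_mult_def)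
    also have "\<dots> = (Q ** diagm l) $ r $ c"
      by (simp add: eigen Q_def matrix_mult_nth diagm_def scaleR_complex if_distrib if_distribR
          mult.commute cong: if_cong)
    finally show ?thesis .
  qed
  then have "A ** Q = Q ** diagm l"
    by (simp add: vec_eq_iff)
  then have "A = Q ** diagm l ** dagger Q"
    using unitary_matD(2)[OF Q] by (metis matrix_mul_assoc matrix_mul_rid)
  moreover have "0 \<le> l i" if "psd_mat A" for i
  proof -
    have "cinner (v i) (A *v v i) = of_real (l i)"
      using eigen orth by (simp add: cinner_scaleR_right)
    then show ?thesis
      using psd_matD[OF that, of "v i"] by simp
  qed
  ultimately show thesis
    using that Q by blast
qed

subsection \<open>Positive semidefinite square roots\<close>

lemma psd_mat_conj:
  assumes "psd_mat A"
  shows "psd_mat (M ** A ** dagger M)"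
proof -
  have "hermitian_mat (M ** A ** dagger M)"
    using psd_mat_hermitian[OF assms] by (simp add: hermitian_mat_def dagger_mult matrix_mul_assoc)
  moreover have "cinner v ((M ** A ** dagger M) *v v) = cinner (dagger M *v v) (A *v (dagger M *v v))"
    for v
    by (simp add: cinner_adjoint flip: matrix_vector_mul_assoc)
  ultimately show ?thesis
    using psd_matD[OF assms] by (simp add: psd_mat_iff)
qed

lemma psd_mat_1: "psd_mat (mat 1 :: complex^'n::finite^'n)"
  by (simp add: psd_mat_iff hermitian_mat_def vec_eq_iff dagger_nth mat_nth cinner_self)

lemma hermitian_square_psd: "hermitian_mat H \<Longrightarrow> psd_mat (H ** H)"
  using psd_mat_conj[OF psd_mat_1, of H] by (simp add: hermitian_mat_def)

lemma psd_sqrt_exists: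
  fixes A :: "complex^'n::finite^'n"
  assumes "psd_mat A"
  shows "\<exists>S. psd_mat S \<and> S ** S = A"
proof -
  obtain Q l where Q: "unitary_mat Q" and A: "A = Q ** diagm l ** dagger Q" and l: "\<forall>i. 0 \<le> l i"
    using hermitian_diagonalization[OF psd_mat_hermitian[OF assms]] assms by metis
  have conj_mult: "(Q ** diagm a ** dagger Q) ** (Q ** diagm b ** dagger Q) =
      Q ** diagm (\<lambda>i. a i * b i) ** dagger Q" for a b
  proof -
    have "(Q ** diagm a ** dagger Q) ** (Q ** diagm b ** dagger Q) =
        Q ** diagm a ** (dagger Q ** Q) ** diagm b ** dagger Q"
      by (simp add: matrix_mul_assoc)
    also have "\<dots> = Q ** (diagm a ** diagm b) ** dagger Q"
      by (simp add: unitary_matD[OF Q] matrix_mul_assoc)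
    finally show ?thesis
      by (simp add: diagm_mult)
  qed
  define S where "S = Q ** diagm (\<lambda>i. sqrt (l i)) ** dagger Q"
  define H where "H = Q ** diagm (\<lambda>i. sqrt (sqrt (l i))) ** dagger Q"
  have "hermitian_mat H"
    by (simp add: H_def hermitian_mat_def dagger_mult hermitian_diagm[unfolded hermitian_mat_def]
        matrix_mul_assoc)
  moreover have "H ** H = S"
    using l by (simp add: H_def S_def conj_mult)
  ultimately have "psd_mat S"
    using hermitian_square_psd by metis
  moreover have "S ** S = A"
    using l by (simp add: S_def A conj_mult)
  ultimately show ?thesis
    by blast
qed

lemma trace_dagger_conj:
  "trace (dagger M ** S ** M) = (\<Sum>k\<in>UNIV. cinner (column k M) (S *v column k M))"
  unfolding trace_def
  by (simp add: matrix_mult_nth dagger_nth cinner_def column_def matrix_vector_mult_def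
      sum_distrib_left sum_distrib_right mult.assoc, intro sum.cong refl sum.swap)

lemma psd_trace_conj_nonneg: "psd_mat S \<Longrightarrow> 0 \<le> Re (trace (dagger M ** S ** M))"
  unfolding trace_dagger_conj Re_sum by (intro sum_nonneg psd_matD)

lemma psd_trace_conj_zero:
  assumes S: "psd_mat S" and zero: "Re (trace (dagger M ** S ** M)) = 0"
  shows "S ** M = 0"
proof -
  have "\<forall>k\<in>UNIV. Re (cinner (column k M) (S *v column k M)) = 0"
    using zero unfolding trace_dagger_conj Re_sum
    by (subst sum_nonneg_eq_0_iff[symmetric]) (auto intro: psd_matD[OF S])
  then have "S *v column k M = 0" for k
    using hermitian_form_min_imp_kernel[OF psd_mat_hermitian[OF S] psd_matD[OF S]] by blast
  then have "(S ** M) $ i $ k = 0" for i k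
    using arg_cong[of _ _ "\<lambda>v. v $ i"]
    by (simp add: matrix_mult_nth matrix_vector_mult_def column_def vec_eq_iff)
  then show ?thesis
    by (simp add: vec_eq_iff)
qed

text \<open>With \<open>D = S - T\<close> one has \<open>S D = - D T\<close>, so \<open>tr (D S D) = - tr (D T D)\<close>; both traces are
  nonnegative, hence zero, which forces \<open>S D = T D = 0\<close> and so \<open>D\<^sup>2 = 0\<close>.\<close>

lemma psd_sqrt_unique:
  fixes S T :: "complex^'n::finite^'n"
  assumes S: "psd_mat S" and T: "psd_mat T" and eq: "S ** S = T ** T"
  shows "S = T"
proof -
  define D where "D = S - T"
  have D: "dagger D = D"
    using psd_mat_hermitian[OF S] psd_mat_hermitian[OF T]
    by (simp add: D_def dagger_diff hermitian_mat_def)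
  have SD: "S ** D = - (D ** T)"
    using eq by (simp add: D_def matrix_mult_diff_left matrix_mult_diff_right matrix_mul_assoc)
  have "trace (dagger D ** S ** D) = trace (D ** (S ** D))"
    by (simp add: D matrix_mul_assoc)
  also have "\<dots> = trace ((S ** D) ** D)"
    by (rule trace_mul_sym)
  also have "\<dots> = - trace (dagger D ** T ** D)"
    by (simp add: SD D matrix_mult_uminus_left trace_uminus)
  finally have "Re (trace (dagger D ** S ** D)) = 0" and "Re (trace (dagger D ** T ** D)) = 0"
    using psd_trace_conj_nonneg[OF S, of D] psd_trace_conj_nonneg[OF T, of D] by auto
  then have "S ** D = 0" and "T ** D = 0"
    by (simp_all add: psd_trace_conj_zero[OF S] psd_trace_conj_zero[OF T])
  moreover have "D ** D = S ** D - T ** D"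
    by (simp add: D_def matrix_mult_diff_left)
  ultimately have "Re (trace (dagger D ** mat 1 ** D)) = 0"
    by (simp add: D trace_def)
  then have "D = 0"
    using psd_trace_conj_zero[OF psd_mat_1] by simp
  then show ?thesis
    by (simp add: D_def)
qed

lemma psd_sqrt_eqI:
  assumes "psd_mat S" and "S ** S = A"
  shows "psd_sqrt A = S"
  unfolding psd_sqrt_def using assms psd_sqrt_unique by blast

lemma
  assumes "psd_mat A"
  shows psd_mat_psd_sqrt: "psd_mat (psd_sqrt A)"
    and psd_sqrt_square: "psd_sqrt A ** psd_sqrt A = A"
  using psd_sqrt_exists[OF assms] psd_sqrt_eqI by metis+

lemma psd_mat_tensor:
  assumes "psd_mat A" and "psd_mat B"
  shows "psd_mat (tensor A B)"
proof -
  have "hermitian_mat (tensor (psd_sqrt A) (psd_sqrt B))"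
    using assms by (simp add: hermitian_tensor psd_mat_hermitian psd_mat_psd_sqrt)
  then have "psd_mat (tensor (psd_sqrt A) (psd_sqrt B) ** tensor (psd_sqrt A) (psd_sqrt B))"
    by (rule hermitian_square_psd)
  then show ?thesis
    using assms by (simp add: tensor_mult psd_sqrt_square)
qed

lemma psd_sqrt_tensor:
  assumes "psd_mat A" and "psd_mat B"
  shows "psd_sqrt (tensor A B) = tensor (psd_sqrt A) (psd_sqrt B)"
  using assms by (intro psd_sqrt_eqI) (simp_all add: psd_mat_tensor psd_mat_psd_sqrt tensor_mult
      psd_sqrt_square)

lemma psd_sqrt_unitary_conj:
  assumes "unitary_mat U" and "psd_mat A"
  shows "psd_sqrt (U ** A ** dagger U) = U ** psd_sqrt A ** dagger U"
proof (rule psd_sqrt_eqI)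
  show "psd_mat (U ** psd_sqrt A ** dagger U)"
    using assms(2) by (intro psd_mat_conj psd_mat_psd_sqrt)
  have "(U ** psd_sqrt A ** dagger U) ** (U ** psd_sqrt A ** dagger U) =
      U ** psd_sqrt A ** (dagger U ** U) ** psd_sqrt A ** dagger U"
    by (simp add: matrix_mul_assoc)
  also have "\<dots> = U ** (psd_sqrt A ** psd_sqrt A) ** dagger U"
    by (simp add: unitary_matD[OF assms(1)] matrix_mul_assoc)
  finally show "(U ** psd_sqrt A ** dagger U) ** (U ** psd_sqrt A ** dagger U) = U ** A ** dagger U"
    by (simp add: psd_sqrt_square[OF assms(2)])
qed

lemma invertible_psd_sqrt:
  assumes "psd_mat A" and "invertible A"
  shows "invertible (psd_sqrt A)"
proof -
  obtain B where "A ** B = mat 1"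
    using assms(2) invertible_def by blast
  then have "psd_sqrt A ** (psd_sqrt A ** B) = mat 1"
    using assms(1) by (simp add: matrix_mul_assoc psd_sqrt_square)
  then show ?thesis
    using invertible_right_inverse by blast
qed

subsection \<open>The Petz recovery map of the channel\<close>

lemma trace_matrix_unit_mult:
  "trace ((\<chi> i j. if i = q \<and> j = p then 1 else 0) ** (M :: complex^'n::finite^'n)) = M $ p $ q"
proof -
  have "trace ((\<chi> i j. if i = q \<and> j = p then 1 else 0) ** M) =
      (\<Sum>i\<in>UNIV. \<Sum>k\<in>UNIV. if i = q then (if k = p then M $ k $ i else 0) else 0)"
    unfolding trace_def matrix_mult_nth by (intro sum.cong refl) simp
  also have "\<dots> = M $ p $ q"
    by (simp add: sum_if_const_cond)
  finally show ?thesis .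
qed

lemma hs_adjoint_eqI:
  fixes F :: "complex^'m::finite^'m \<Rightarrow> complex^'n::finite^'n"
  assumes "\<And>X Y. trace (E X ** Y) = trace (X ** F Y)"
  shows "hs_adjoint E = F"
  unfolding hs_adjoint_def
proof (rule the_equality)
  fix G :: "complex^'m^'m \<Rightarrow> complex^'n^'n"
  assume G: "\<forall>X Y. trace (E X ** Y) = trace (X ** G Y)"
  have "trace (X ** G Y) = trace (X ** F Y)" for X Y
    using G assms by metis
  from this[of "\<chi> i j. if i = q \<and> j = p then 1 else 0" for p q]
  show "G = F"
    by (simp add: trace_matrix_unit_mult vec_eq_iff fun_eq_iff)
qed (use assms in blast)

lemma hs_adjoint_channel:
  "hs_adjoint (channel U \<beta>) = (\<lambda>Y. ptrB (tensor (mat 1) \<beta> ** dagger U ** tensor Y (mat 1) ** U))"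
proof (rule hs_adjoint_eqI)
  fix X Y
  have "trace (channel U \<beta> X ** Y) = trace (tensor Y (mat 1) ** (U ** tensor X \<beta> ** dagger U))"
    unfolding channel_def by (simp add: trace_mul_sym[of _ Y] trace_mult_ptrB)
  also have "\<dots> = trace ((tensor Y (mat 1) ** U) ** (tensor X \<beta> ** dagger U))"
    by (simp add: matrix_mul_assoc)
  also have "\<dots> = trace ((tensor X \<beta> ** dagger U) ** (tensor Y (mat 1) ** U))"
    by (rule trace_mul_sym)
  also have "\<dots> = trace (tensor X (mat 1) ** (tensor (mat 1) \<beta> ** dagger U ** tensor Y (mat 1) ** U))"
    by (simp add: matrix_mul_assoc tensor_mult)
  also have "\<dots> = trace (X ** ptrB (tensor (mat 1) \<beta> ** dagger U ** tensor Y (mat 1) ** U))"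
    by (simp add: trace_mult_ptrB)
  finally show "trace (channel U \<beta> X ** Y) =
      trace (X ** ptrB (tensor (mat 1) \<beta> ** dagger U ** tensor Y (mat 1) ** U))" .
qed

lemma unitary_conj_tensor_psd_sqrt:
  assumes U: "unitary_mat U"
    and psd: "psd_mat \<alpha>" "psd_mat \<beta>" "psd_mat \<alpha>'" "psd_mat \<beta>'"
    and conj: "U ** tensor \<alpha> \<beta> ** dagger U = tensor \<alpha>' \<beta>'"
  shows "U ** tensor (psd_sqrt \<alpha>) (psd_sqrt \<beta>) ** dagger U = tensor (psd_sqrt \<alpha>') (psd_sqrt \<beta>')"
proof -
  have "U ** psd_sqrt (tensor \<alpha> \<beta>) ** dagger U = psd_sqrt (tensor \<alpha>' \<beta>')"
    using psd_sqrt_unitary_conj[OF U psd_mat_tensor[OF psd(1,2)]] by (simp add: conj)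
  then show ?thesis
    by (simp add: psd_sqrt_tensor psd)
qed

lemma unitary_conj_sandwich:
  assumes "unitary_mat U" and "U ** T ** dagger U = T'"
  shows "T ** dagger U ** M ** U ** T = dagger U ** T' ** M ** T' ** U"
proof -
  have "T ** dagger U = dagger U ** T'"
    by (simp flip: assms(2) add: matrix_mul_assoc unitary_matD[OF assms(1)])
  moreover have "U ** T = T' ** U"
    by (simp flip: assms(2) matrix_mul_assoc add: unitary_matD[OF assms(1)])
  ultimately show ?thesis
    by (metis matrix_mul_assoc)
qed

lemma channel_eq_of_conj_tensor:
  assumes "U ** tensor \<alpha> \<beta> ** dagger U = tensor \<alpha>' \<beta>'" and "trace \<beta>' = 1"
  shows "channel U \<beta> \<alpha> = \<alpha>'"
  using assms by (simp add: channel_def ptrB_tensor)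

theorem theorem3:
  fixes U :: "complex^('a::finite \<times> 'b::finite)^('a \<times> 'b)"
    and \<alpha> \<alpha>' :: "complex^'a^'a"
    and \<beta> \<beta>' :: "complex^'b^'b"
  assumes "unitary_mat U"
    and "density_op \<alpha>" and "density_op \<alpha>'"
    and "density_op \<beta>" and "density_op \<beta>'"
    and "\<not> maximally_mixed \<alpha> \<or> \<not> maximally_mixed \<beta>"
    and "U ** tensor \<alpha> \<beta> ** dagger U = tensor \<alpha>' \<beta>'"
    and "invertible \<alpha>'"
  shows "tabletop_reversible U \<beta> \<alpha> \<and>
         (\<forall>X. petz (channel U \<beta>) \<alpha> X = ptrB (dagger U ** tensor X \<beta>' ** U))"
proof -
  have psd: "psd_mat \<alpha>" "psd_mat \<beta>" "psd_mat \<alpha>'" "psd_mat \<beta>'"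
    using assms(2-5) by (simp_all add: density_op_def)
  define Sa Sb Sa' Sb' where "Sa = psd_sqrt \<alpha>" and "Sb = psd_sqrt \<beta>"
    and "Sa' = psd_sqrt \<alpha>'" and "Sb' = psd_sqrt \<beta>'"
  define R where "R = matrix_inv Sa'"
  have R: "Sa' ** R = mat 1" "R ** Sa' = mat 1"
    using matrix_inv_inverse[OF invertible_psd_sqrt[OF psd(3) assms(8)]]
    by (simp_all add: R_def Sa'_def)
  have sandwich: "tensor Sa Sb ** dagger U ** M ** U ** tensor Sa Sb =
      dagger U ** tensor Sa' Sb' ** M ** tensor Sa' Sb' ** U" for M
    unfolding Sa_def Sb_def Sa'_def Sb'_def
    by (rule unitary_conj_sandwich[OF assms(1) unitary_conj_tensor_psd_sqrt[OF assms(1) psd assms(7)]])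
  have channel_prior: "channel U \<beta> \<alpha> = \<alpha>'"
    using assms(5,7) by (simp add: channel_eq_of_conj_tensor density_op_def)
  have "petz (channel U \<beta>) \<alpha> X = ptrB (dagger U ** tensor X \<beta>' ** U)" for X
  proof -
    have "petz (channel U \<beta>) \<alpha> X =
        Sa ** ptrB (tensor (mat 1) (Sb ** Sb) ** (dagger U ** tensor (R ** X ** R) (mat 1) ** U)) ** Sa"
      by (simp add: petz_def Let_def channel_prior hs_adjoint_channel psd_sqrt_square psd Sa_def Sb_def
          Sa'_def R_def matrix_mul_assoc)
    also have "\<dots> =
        ptrB (tensor Sa Sb ** (dagger U ** tensor (R ** X ** R) (mat 1) ** U) ** tensor Sa Sb)"
      by (rule ptrB_sandwich)
    also have "\<dots> =
        ptrB (dagger U ** (tensor Sa' Sb' ** tensor (R ** X ** R) (mat 1) ** tensor Sa' Sb') ** U)"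
      by (simp add: sandwich matrix_mul_assoc)
    also have "\<dots> = ptrB (dagger U ** tensor ((Sa' ** R) ** X ** (R ** Sa')) (Sb' ** Sb') ** U)"
      by (simp add: tensor_mult matrix_mul_assoc)
    also have "\<dots> = ptrB (dagger U ** tensor X \<beta>' ** U)"
      by (simp add: R Sb'_def psd_sqrt_square psd)
    finally show ?thesis .
  qed
  then show ?thesis
    using assms(5) by (auto simp: tabletop_reversible_def)
qed

end
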